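(* Let $\mathcal{L}$ be a set, $\mathcal{R}\subseteq\mathcal{P}(\mathcal{L})\times\mathcal{L}$, and let $\mathcal{S}=\langle\mathcal{L},\vdash\rangle$ be the Hilbert-type logical structure induced by $\mathcal{R}$. Let $\Pi$ be a collection of relations $\sigma\subseteq\mathcal{P}(\mathcal{L})\times\mathcal{L}$, and let $\mathcal{S}^\Pi=\langle\mathcal{L},\vdash^\Pi\rangle$ be the $\Pi$-restricted companion of $\mathcal{S}$. Define $\varrho\subseteq\mathcal{P}(\mathcal{L})\times\mathcal{L}$ by $(\Delta,\alpha)\in\varrho$ iff $\Delta\vdash^\Pi\alpha$. Then $\vdash^\Pi\,=\,\vdash^\varrho$, where $\vdash^\varrho$ is the $\varrho$-companion of $\mathcal{S}$.
   Context: For $\mathcal{R}\subseteq\mathcal{P}(\mathcal{L})\times\mathcal{L}$, the Hilbert-type logical structure induced by $\mathcal{R}$ is $\langle\mathcal{L},\vdash\rangle$ where $\Gamma\vdash\alpha$ iff there is a finite sequence $(\beta_0,\ldots,\beta_n)$ of elements of $\mathcal{L}$ with $\beta_n=\alpha$ such that for each $0\le i\le n$, either $\beta_i\in\Gamma$ or there is $\Gamma'\subseteq\{\beta_0,\ldots,\beta_{i-1}\}$ with $(\Gamma',\beta_i)\in\mathcal{R}$. The $\Pi$-restricted companion of the structure induced by $\mathcal{R}$ is the Hilbert-type logical structure induced by $\mathcal{R}^\Pi=\{(\Gamma,\alpha)\in\mathcal{R}\mid (\Gamma,\alpha)\in\sigma\text{ for some }\sigma\in\Pi\}$. For a logical structure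 $\langle\mathcal{L},\vdash\rangle$ and $\varrho\subseteq\mathcal{P}(\mathcal{L})\times\mathcal{L}$, the $\varrho$-companion is given by: $\Gamma\vdash^\varrho\alpha$ iff there is $\Delta\subseteq\Gamma$ with $(\Delta,\alpha)\in\varrho$ and $\Delta\vdash\alpha$. *)

theory Defs
  imports Main
begin

text \<open>The language L is modelled as the type 'a (all formulas).
  A logical structure is given by its consequence relation of type
  'a set \<Rightarrow> 'a \<Rightarrow> bool.\<close>

definition hilbert_cons :: "('a set \<times> 'a) set \<Rightarrow> 'a set \<Rightarrow> 'a \<Rightarrow> bool" where
  "hilbert_cons R \<Gamma> \<alpha> \<longleftrightarrow>
     (\<exists>bs. bs \<noteq> [] \<and> last bs = \<alpha> \<and>
        (\<forall>i < length bs. bs ! i \<in> \<Gamma> \<or>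
           (\<exists>\<Gamma>'. \<Gamma>' \<subseteq> set (take i bs) \<and> (\<Gamma>', bs ! i) \<in> R)))"

definition restricted_rules :: "('a set \<times> 'a) set \<Rightarrow> ('a set \<times> 'a) set set \<Rightarrow> ('a set \<times> 'a) set" where
  "restricted_rules R \<Pi> = {r \<in> R. \<exists>\<sigma> \<in> \<Pi>. r \<in> \<sigma>}"

definition restricted_companion :: "('a set \<times> 'a) set \<Rightarrow> ('a set \<times> 'a) set set \<Rightarrow> 'a set \<Rightarrow> 'a \<Rightarrow> bool" where
  "restricted_companion R \<Pi> = hilbert_cons (restricted_rules R \<Pi>)"

definition rho_companion :: "('a set \<Rightarrow> 'a \<Rightarrow> bool) \<Rightarrow> ('a set \<times> 'a) set \<Rightarrow> 'a set \<Rightarrow> 'a \<Rightarrow> bool" where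
  "rho_companion cons \<rho> \<Gamma> \<alpha> \<longleftrightarrow> (\<exists>\<Delta> \<subseteq> \<Gamma>. (\<Delta>, \<alpha>) \<in> \<rho> \<and> cons \<Delta> \<alpha>)"

end

theory Submission
  imports Defs
begin

text \<open>Since \<open>\<turnstile>\<^sup>\<Pi>\<close> uses only some of the rules of \<open>\<turnstile>\<close>, it is contained in \<open>\<turnstile>\<close>, so
  \<open>\<Gamma> \<turnstile>\<^sup>\<Pi> \<alpha>\<close> gives \<open>\<Gamma> \<turnstile>\<^sup>\<rho> \<alpha>\<close> with \<open>\<Delta> = \<Gamma>\<close>; conversely, Hilbert-type consequence is
  monotone in the premises, so \<open>\<Delta> \<turnstile>\<^sup>\<Pi> \<alpha>\<close> for some \<open>\<Delta> \<subseteq> \<Gamma>\<close> gives \<open>\<Gamma> \<turnstile>\<^sup>\<Pi> \<alpha>\<close>.\<close>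

lemma hilbert_cons_mono:
  assumes "R \<subseteq> R'" and "\<Gamma> \<subseteq> \<Gamma>'" and "hilbert_cons R \<Gamma> \<alpha>"
  shows "hilbert_cons R' \<Gamma>' \<alpha>"
proof -
  obtain bs where "bs \<noteq> []" "last bs = \<alpha>" and steps:
    "\<forall>i < length bs. bs ! i \<in> \<Gamma> \<or> (\<exists>\<Delta>. \<Delta> \<subseteq> set (take i bs) \<and> (\<Delta>, bs ! i) \<in> R)"
    using assms(3) unfolding hilbert_cons_def by blast
  moreover have "\<forall>i < length bs. bs ! i \<in> \<Gamma>' \<or> (\<exists>\<Delta>. \<Delta> \<subseteq> set (take i bs) \<and> (\<Delta>, bs ! i) \<in> R')"
    using steps assms(1,2) by (meson subsetD)
  ultimately show ?thesis
    unfolding hilbert_cons_def by blast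
qed

lemma restricted_rules_subset: "restricted_rules R \<Pi> \<subseteq> R"
  unfolding restricted_rules_def by blast

lemma restricted_companion_imp_hilbert_cons:
  "restricted_companion R \<Pi> \<Gamma> \<alpha> \<Longrightarrow> hilbert_cons R \<Gamma> \<alpha>"
  unfolding restricted_companion_def
  using hilbert_cons_mono[OF restricted_rules_subset order_refl] .

lemma restricted_companion_mono:
  "\<Gamma> \<subseteq> \<Gamma>' \<Longrightarrow> restricted_companion R \<Pi> \<Gamma> \<alpha> \<Longrightarrow> restricted_companion R \<Pi> \<Gamma>' \<alpha>"
  unfolding restricted_companion_def by (rule hilbert_cons_mono[OF order_refl])

theorem mainTheorem13:
  fixes R :: "('a set \<times> 'a) set" and \<Pi> :: "('a set \<times> 'a) set set"
  defines "\<rho> \<equiv> {(\<Delta>, \<alpha>). restricted_companion R \<Pi> \<Delta> \<alpha>}"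
  shows "restricted_companion R \<Pi> = rho_companion (hilbert_cons R) \<rho>"
proof (intro ext iffI)
  fix \<Gamma> \<alpha>
  assume "restricted_companion R \<Pi> \<Gamma> \<alpha>"
  then show "rho_companion (hilbert_cons R) \<rho> \<Gamma> \<alpha>"
    unfolding rho_companion_def \<rho>_def
    by (auto intro: restricted_companion_imp_hilbert_cons)
next
  fix \<Gamma> \<alpha>
  assume "rho_companion (hilbert_cons R) \<rho> \<Gamma> \<alpha>"
  then obtain \<Delta> where "\<Delta> \<subseteq> \<Gamma>" and "restricted_companion R \<Pi> \<Delta> \<alpha>"
    unfolding rho_companion_def \<rho>_def by auto
  then show "restricted_companion R \<Pi> \<Gamma> \<alpha>"
    by (rule restricted_companion_mono)
qed

end
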